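(* Let $0<\gamma<0.1$ and consider the dataset in $\mathbb{R}^2$: $\mathbf{x}_1=(\gamma,\sqrt{1-\gamma^2})$, $\mathbf{x}_2=(\gamma,-\sqrt{1-\gamma^2}/2)$, $y_1=y_2=1$. Let $L(\mathbf{w})=\frac12\sum_{i=1}^2\ln(1+\exp(-y_i\mathbf{x}_i^\top\mathbf{w}))$ and run gradient descent $\mathbf{w}_t=\mathbf{w}_{t-1}-\eta\nabla L(\mathbf{w}_{t-1})$ with $\mathbf{w}_0=0$ and constant stepsize $\eta>0$. If the sequence $(L(\mathbf{w}_t))_{t\ge0}$ is non-increasing, then $L(\mathbf{w}_t)\ge c_0/t$ for all $t\ge1$, where $c_0>0$ depends only on $\gamma$ (not on $t$ or $\eta$). *)

theory Defs
  imports "HOL-Analysis.Analysis"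
begin

definition data_x :: "real \<Rightarrow> nat \<Rightarrow> real^2" where
  "data_x \<gamma> i = (if i = 1 then vector [\<gamma>, sqrt (1 - \<gamma>^2)]
                   else vector [\<gamma>, - sqrt (1 - \<gamma>^2) / 2])"

definition data_y :: "nat \<Rightarrow> real" where
  "data_y i = 1"

definition logloss :: "real \<Rightarrow> real^2 \<Rightarrow> real" where
  "logloss \<gamma> w = (1/2) * (\<Sum>i\<in>{1,2::nat}. ln (1 + exp (- data_y i * (data_x \<gamma> i \<bullet> w))))"

definition logloss_grad :: "real \<Rightarrow> real^2 \<Rightarrow> real^2" where
  "logloss_grad \<gamma> w = (1/2) *\<^sub>R (\<Sum>i\<in>{1,2::nat}.
      (- data_y i / (1 + exp (data_y i * (data_x \<gamma> i \<bullet> w)))) *\<^sub>R data_x \<gamma> i)"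

primrec gd :: "real \<Rightarrow> real \<Rightarrow> nat \<Rightarrow> real^2" where
  "gd \<gamma> \<eta> 0 = 0"
| "gd \<gamma> \<eta> (Suc t) = gd \<gamma> \<eta> t - \<eta> *\<^sub>R logloss_grad \<gamma> (gd \<gamma> \<eta> t)"

end

theory Submission
  imports Defs
begin

text \<open>
  The logistic loss \<open>l z = ln (1 + exp (- z))\<close> satisfies \<open>\<bar>l'\<bar> \<le> l\<close>, so \<open>ln \<circ> l\<close> is
  1-Lipschitz. As the data have norm at most 1, this gives \<open>norm (\<nabla>L w) \<le> L w\<close>, and a
  gradient step moves every margin by at most \<open>\<eta> L w\<close>; hence
  \<open>L w\<^sub>t\<^sub>+\<^sub>1 \<ge> exp (- \<eta> L w\<^sub>t) L w\<^sub>t\<close>, i.e. \<open>1 / L w\<^sub>t\<^sub>+\<^sub>1 \<le> 1 / L w\<^sub>t + \<eta> exp \<eta>\<close> as long as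
  the losses stay below \<open>L 0 = ln 2 < 1\<close>. A monotone run cannot have a large stepsize:
  the first step pushes the margin of \<open>x\<^sub>2\<close> down to at most \<open>-\<eta>/20\<close>, so \<open>L w\<^sub>1 \<ge> \<eta>/40\<close>,
  and \<open>L w\<^sub>1 \<le> 1\<close> forces \<open>\<eta> \<le> 40\<close>. Summing gives \<open>1 / L w\<^sub>t \<le> 2 + 40 exp 40 t\<close>.
\<close>

definition logistic_loss :: "real \<Rightarrow> real" where
  "logistic_loss z = ln (1 + exp (- z))"

lemma logistic_loss_pos: "0 < logistic_loss z"
  unfolding logistic_loss_def by (simp add: ln_gt_zero)

lemma logistic_loss_ge_neg: "- z \<le> logistic_loss z"
proof -
  have "ln (exp (- z)) \<le> ln (1 + exp (- z))"
    by (subst ln_le_cancel_iff) (auto simp: add_pos_pos)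
  then show ?thesis unfolding logistic_loss_def by simp
qed

lemma sigmoid_le_logistic_loss: "1 / (1 + exp z) \<le> logistic_loss z"
proof -
  define u where "u = exp (- z)"
  have u: "0 < u" unfolding u_def by simp
  have "ln (1 / (1 + u)) \<le> 1 / (1 + u) - 1"
    using u by (intro ln_le_minus_one) auto
  then have "u / (1 + u) \<le> ln (1 + u)"
    using u by (simp add: ln_div field_simps)
  moreover have "1 / (1 + exp z) = u / (1 + u)"
    unfolding u_def by (simp add: exp_minus field_simps)
  ultimately show ?thesis unfolding logistic_loss_def u_def by simp
qed

lemma logistic_loss_antimono: "z \<le> z' \<Longrightarrow> logistic_loss z' \<le> logistic_loss z"
  unfolding logistic_loss_def by (subst ln_le_cancel_iff) (auto simp: add_pos_pos)

lemma logistic_loss_shift_ge: "exp (- \<bar>z' - z\<bar>) * logistic_loss z \<le> logistic_loss z'"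
proof (cases "z \<le> z'")
  case True
  define l where "l = exp (- (z' - z))"
  define u where "u = exp (- z)"
  have l: "0 \<le> l" "l \<le> 1" unfolding l_def using True by auto
  have u: "0 < u" unfolding u_def by simp
  have "(1 - l) * ln 1 + l * ln (1 + u) \<le> ln ((1 - l) *\<^sub>R 1 + l *\<^sub>R (1 + u))"
    using l u by (intro concave_onD[OF ln_concave]) auto
  then have "l * ln (1 + u) \<le> ln (1 + l * u)"
    by (simp add: algebra_simps)
  moreover have "l * u = exp (- z')"
    unfolding l_def u_def by (simp flip: exp_add)
  ultimately show ?thesis
    using True unfolding logistic_loss_def l_def u_def by simp
next
  case False
  have "exp (- \<bar>z' - z\<bar>) * logistic_loss z \<le> 1 * logistic_loss z"
    using logistic_loss_pos[of z] by (intro mult_right_mono) auto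
  also have "\<dots> \<le> logistic_loss z'"
    using False logistic_loss_antimono[of z' z] by simp
  finally show ?thesis .
qed

lemma inverse_le_of_exp_decay:
  fixes x :: "nat \<Rightarrow> real"
  assumes pos: "\<And>n. 0 < x n" and bounded: "\<And>n. x n \<le> B" and "0 \<le> c"
    and decay: "\<And>n. exp (- c * x n) * x n \<le> x (Suc n)"
  shows "1 / x n \<le> 1 / x 0 + n * (c * exp (c * B))"
proof (induction n)
  case 0
  show ?case by simp
next
  case (Suc n)
  have tangent: "exp s \<le> 1 + s * exp s" for s :: real
  proof -
    have "(1 - s) * exp s \<le> exp (- s) * exp s"
      using exp_ge_add_one_self[of "- s"] by (intro mult_right_mono) auto
    then show ?thesis by (simp add: exp_minus algebra_simps)
  qed
  have "1 / x (Suc n) \<le> 1 / (exp (- c * x n) * x n)"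
    using pos decay by (intro divide_left_mono) auto
  also have "\<dots> = exp (c * x n) / x n"
    by (simp add: exp_minus field_simps)
  also have "\<dots> \<le> (1 + c * x n * exp (c * x n)) / x n"
    using pos[of n] tangent by (simp add: divide_right_mono less_imp_le)
  also have "\<dots> = 1 / x n + c * exp (c * x n)"
    using pos[of n] by (simp add: field_simps)
  also have "\<dots> \<le> 1 / x n + c * exp (c * B)"
    using \<open>0 \<le> c\<close> bounded by (intro add_left_mono mult_left_mono) (auto intro: mult_left_mono)
  finally show ?case using Suc.IH by (simp add: algebra_simps)
qed

lemma inner_data_x:
  "data_x \<gamma> i \<bullet> w = data_x \<gamma> i $ 1 * w $ 1 + data_x \<gamma> i $ 2 * w $ 2"
  by (simp add: inner_vec_def sum_2)

lemma norm_data_x_le_1: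
  assumes "\<bar>\<gamma>\<bar> \<le> 1"
  shows "norm (data_x \<gamma> i) \<le> 1"
proof -
  have "\<gamma>\<^sup>2 \<le> 1" using assms by (simp add: abs_square_le_1)
  then have "data_x \<gamma> i \<bullet> data_x \<gamma> i \<le> 1"
    unfolding inner_data_x by (auto simp: data_x_def power2_eq_square field_simps)
  then show ?thesis by (simp add: norm_eq_sqrt_inner)
qed

lemma logloss_eq:
  "logloss \<gamma> w = (logistic_loss (data_x \<gamma> 1 \<bullet> w) + logistic_loss (data_x \<gamma> 2 \<bullet> w)) / 2"
  unfolding logloss_def logistic_loss_def data_y_def by simp

lemma logloss_pos: "0 < logloss \<gamma> w"
  unfolding logloss_eq using logistic_loss_pos by (simp add: add_pos_pos)

lemma logloss_zero: "logloss \<gamma> 0 = ln 2"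
  unfolding logloss_eq logistic_loss_def by simp

lemma logloss_grad_eq:
  "logloss_grad \<gamma> w = (1/2) *\<^sub>R ((- 1 / (1 + exp (data_x \<gamma> 1 \<bullet> w))) *\<^sub>R data_x \<gamma> 1
     + (- 1 / (1 + exp (data_x \<gamma> 2 \<bullet> w))) *\<^sub>R data_x \<gamma> 2)"
  unfolding logloss_grad_def data_y_def by simp

lemma norm_logloss_grad_le:
  assumes "\<bar>\<gamma>\<bar> \<le> 1"
  shows "norm (logloss_grad \<gamma> w) \<le> logloss \<gamma> w"
proof -
  define a where "a i = - 1 / (1 + exp (data_x \<gamma> i \<bullet> w))" for i
  have a: "\<bar>a i\<bar> \<le> logistic_loss (data_x \<gamma> i \<bullet> w)" for i
    using sigmoid_le_logistic_loss add_pos_pos[OF zero_less_one exp_gt_zero]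
    unfolding a_def by (simp add: abs_minus_commute abs_of_pos)
  have "norm (logloss_grad \<gamma> w) = norm (a 1 *\<^sub>R data_x \<gamma> 1 + a 2 *\<^sub>R data_x \<gamma> 2) / 2"
    unfolding logloss_grad_eq a_def by simp
  also have "\<dots> \<le> (\<bar>a 1\<bar> * norm (data_x \<gamma> 1) + \<bar>a 2\<bar> * norm (data_x \<gamma> 2)) / 2"
    by (intro divide_right_mono order.trans[OF norm_triangle_ineq]) auto
  also have "\<dots> \<le> (\<bar>a 1\<bar> + \<bar>a 2\<bar>) / 2"
    using norm_data_x_le_1[OF assms]
    by (intro divide_right_mono add_mono) (auto intro: mult_left_le)
  also have "\<dots> \<le> logloss \<gamma> w"
    unfolding logloss_eq using a[of 1] a[of 2] by simp
  finally show ?thesis .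
qed

lemma logloss_gradient_step_ge:
  assumes "\<bar>\<gamma>\<bar> \<le> 1" "0 \<le> \<eta>"
  shows "exp (- \<eta> * logloss \<gamma> w) * logloss \<gamma> w \<le> logloss \<gamma> (w - \<eta> *\<^sub>R logloss_grad \<gamma> w)"
proof -
  define L where "L = logloss \<gamma> w"
  define w' where "w' = w - \<eta> *\<^sub>R logloss_grad \<gamma> w"
  have margin_shift: "\<bar>data_x \<gamma> i \<bullet> w' - data_x \<gamma> i \<bullet> w\<bar> \<le> \<eta> * L" for i
  proof -
    have "\<bar>data_x \<gamma> i \<bullet> w' - data_x \<gamma> i \<bullet> w\<bar> = \<eta> * \<bar>data_x \<gamma> i \<bullet> logloss_grad \<gamma> w\<bar>"
      using assms by (simp add: w'_def inner_diff_right abs_mult)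
    also have "\<dots> \<le> \<eta> * (norm (data_x \<gamma> i) * norm (logloss_grad \<gamma> w))"
      using assms by (intro mult_left_mono Cauchy_Schwarz_ineq2) auto
    also have "\<dots> \<le> \<eta> * (1 * L)"
      using assms norm_data_x_le_1[OF assms(1)] norm_logloss_grad_le[OF assms(1)]
      unfolding L_def by (intro mult_left_mono mult_mono) auto
    finally show ?thesis by simp
  qed
  define E where "E = exp (- \<eta> * L)"
  have "E * logistic_loss (data_x \<gamma> i \<bullet> w) \<le> logistic_loss (data_x \<gamma> i \<bullet> w')" for i
    using margin_shift[of i] logistic_loss_pos
    unfolding E_def
    by (intro order.trans[OF _ logistic_loss_shift_ge[of _ "data_x \<gamma> i \<bullet> w"]] mult_right_mono)
      (auto intro: less_imp_le)
  from this[of 1] this[of 2] have "E * L \<le> logloss \<gamma> w'"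
    unfolding logloss_eq L_def by (simp add: algebra_simps)
  then show ?thesis unfolding E_def L_def w'_def .
qed

lemma logloss_gd_one_ge:
  assumes "\<bar>\<gamma>\<bar> \<le> 1/10" "0 \<le> \<eta>"
  shows "\<eta> / 40 \<le> logloss \<gamma> (gd \<gamma> \<eta> 1)"
proof -
  have \<gamma>: "\<gamma>\<^sup>2 \<le> 1/100"
    using assms(1) abs_le_square_iff[of \<gamma> "1/10"] by (simp add: power2_eq_square)
  have sqrt_sq: "sqrt (1 - \<gamma>\<^sup>2) * sqrt (1 - \<gamma>\<^sup>2) = 1 - \<gamma>\<^sup>2"
    using \<gamma> by simp
  have gd_one: "gd \<gamma> \<eta> 1 = (\<eta> / 4) *\<^sub>R (data_x \<gamma> 1 + data_x \<gamma> 2)"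
    by (simp add: logloss_grad_eq algebra_simps)
  have inner_21: "data_x \<gamma> 2 \<bullet> data_x \<gamma> 1 = \<gamma>\<^sup>2 - (1 - \<gamma>\<^sup>2) / 2"
    and inner_22: "data_x \<gamma> 2 \<bullet> data_x \<gamma> 2 = \<gamma>\<^sup>2 + (1 - \<gamma>\<^sup>2) / 4"
    unfolding inner_data_x using sqrt_sq by (simp_all add: data_x_def power2_eq_square)
  have "data_x \<gamma> 2 \<bullet> gd \<gamma> \<eta> 1 = \<eta> / 4 * (2 * \<gamma>\<^sup>2 - (1 - \<gamma>\<^sup>2) / 4)"
    unfolding gd_one inner_scaleR_right inner_add_right inner_21 inner_22 by (simp add: field_simps)
  also have "\<dots> \<le> \<eta> / 4 * (- 1 / 5)"
    using \<gamma> assms(2) by (intro mult_left_mono) (auto simp: field_simps)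
  finally have "\<eta> / 20 \<le> logistic_loss (data_x \<gamma> 2 \<bullet> gd \<gamma> \<eta> 1)"
    using logistic_loss_ge_neg[of "data_x \<gamma> 2 \<bullet> gd \<gamma> \<eta> 1"] by simp
  then show ?thesis
    unfolding logloss_eq using logistic_loss_pos[of "data_x \<gamma> 1 \<bullet> gd \<gamma> \<eta> 1"] by simp
qed

lemma inverse_logloss_gd_le:
  assumes "\<bar>\<gamma>\<bar> \<le> 1/10" "0 < \<eta>" and dec: "decseq (\<lambda>t. logloss \<gamma> (gd \<gamma> \<eta> t))"
  shows "1 / logloss \<gamma> (gd \<gamma> \<eta> t) \<le> 2 + t * (40 * exp 40)"
proof -
  define L where "L t = logloss \<gamma> (gd \<gamma> \<eta> t)" for t
  have L_le_1: "L n \<le> 1" for n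
    using decseqD[OF dec, of 0 n] ln_2_less_1 by (simp add: L_def logloss_zero)
  have "\<eta> \<le> 40"
    using logloss_gd_one_ge[OF assms(1), of \<eta>] L_le_1[of 1] assms(2) by (simp add: L_def)
  have "1 / L t \<le> 1 / L 0 + t * (\<eta> * exp (\<eta> * 1))"
    using assms logloss_pos L_le_1 logloss_gradient_step_ge[of \<gamma> \<eta>]
    by (intro inverse_le_of_exp_decay) (auto simp: L_def)
  also have "\<dots> \<le> 2 + t * (40 * exp 40)"
    using ln2_ge_two_thirds \<open>\<eta> \<le> 40\<close> assms(2)
    by (intro add_mono mult_left_mono mult_mono) (auto simp: L_def logloss_zero field_simps)
  finally show ?thesis unfolding L_def .
qed

theorem mainTheorem3:
  fixes \<gamma> :: real
  assumes "0 < \<gamma>" and "\<gamma> < 0.1"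
  shows "\<exists>c0 > 0. \<forall>\<eta> > 0.
           decseq (\<lambda>t. logloss \<gamma> (gd \<gamma> \<eta> t)) \<longrightarrow>
           (\<forall>t \<ge> 1. logloss \<gamma> (gd \<gamma> \<eta> t) \<ge> c0 / real t)"
proof (intro exI[of _ "1 / (2 + 40 * exp 40)"] conjI allI impI)
  show "0 < 1 / (2 + 40 * exp 40 :: real)" by (simp add: add_pos_pos)
  fix \<eta> :: real and t :: nat
  assume "0 < \<eta>" and dec: "decseq (\<lambda>t. logloss \<gamma> (gd \<gamma> \<eta> t))" and "1 \<le> t"
  have "1 / logloss \<gamma> (gd \<gamma> \<eta> t) \<le> 2 + t * (40 * exp 40)"
    using inverse_logloss_gd_le[OF _ \<open>0 < \<eta>\<close> dec] assms by simp
  also have "\<dots> \<le> (2 + 40 * exp 40) * t"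
    using \<open>1 \<le> t\<close> by (simp add: algebra_simps)
  finally have "1 \<le> logloss \<gamma> (gd \<gamma> \<eta> t) * ((2 + 40 * exp 40) * t)"
    using logloss_pos by (simp add: divide_le_eq mult.commute)
  moreover have "0 < (2 + 40 * exp 40 :: real) * t"
    using \<open>1 \<le> t\<close> by (simp add: add_pos_pos)
  ultimately show "1 / (2 + 40 * exp 40) / real t \<le> logloss \<gamma> (gd \<gamma> \<eta> t)"
    by (simp add: divide_le_eq mult.commute)
qed

end
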